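(* For all integers $n,\alpha,\beta\ge0$ and $r,s\in\mathbb{Z}$, $${n-\beta\choose\alpha}_r+{n-\alpha\choose\beta}_s={n\choose\alpha+\beta}_{r+s}+\sum_{k=0}^{n}\ \sum_{\substack{\ell,m\ge0\\ \ell+m=k-1}}{n\choose k}_{r+s}{\ell\choose\alpha}_r{m\choose\beta}_s.$$
   Context: The Euler polynomials $E_n(x)$ are defined by $\frac{2e^{xt}}{e^t+1}=\sum_{n\ge0}E_n(x)\frac{t^n}{n!}$. For integers $N\ge0$, define ${N\brack j}$ by $\sum_{j=1}^N{N\brack j}x^{2j-1}=x^{2N}-E_{2N}(x)$ and ${N\brace j}$ by $\sum_{j=0}^N{N\brace j}x^{2j}=x^{2N+1}-E_{2N+1}(x)$; set ${N\brack j}=0$ if $j\le0$ or $j>N$, ${N\brace j}=0$ if $j<0$ or $j>N$. For $r\in\mathbb{Z}$ and integers $0\le i\le n$ define $${n\choose i}_r:=\begin{cases}{r/2+n\brack r/2+i}, & r\text{ even},\ n\ge\max\{0,-r/2\},\\ -{-r/2-i\brack -r/2-n}, & r\text{ even},\ 0\le n<-r/2,\\ {(r-1)/2+n\brace (r-1)/2+i}, & r\text{ odd},\ n\ge\max\{0,-(r-1)/2\},\\ -{-(r+1)/2-i\brace -(r+1)/2-n}, & r\text{ odd},\ 0\le n<-(r-1)/2,\end{cases}$$ and set ${n\choose i}_r:=0$ whenever $n<0$, $i<0$ or $i>n$. (Equivalently, for $0\le i\le n$, ${n\choose i}_r=f_{n-i+1}\binom{r+2n}{r+2i-1}$ if $n\ge\max\{0,\lceil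 -r/2\rceil\}$ and $-f_{n-i+1}\binom{-r-2i}{-r-2n-1}$ if $0\le n<\lceil -r/2\rceil$, where $f_m=\frac{4^m-1}{m}B_{2m}$ and $B_j$ are the Bernoulli numbers.) *)

theory Defs
  imports "HOL-Computational_Algebra.Computational_Algebra"
begin

text \<open>Generating function 2 e^{xt}/(e^t+1) as a formal power series in t whose
coefficients are real polynomials in x.  e^{xt} has t^n-coefficient x^n/n!;
the factor 2/(e^t+1) is a power series with real (constant) coefficients.\<close>

definition exp_xt :: "real poly fps" where
  "exp_xt = Abs_fps (\<lambda>n. monom (1 / fact n) n)"

definition euler_gf :: "real poly fps" where
  "euler_gf = exp_xt * Abs_fps (\<lambda>k. [: fps_nth (2 * inverse (fps_exp (1::real) + 1)) k :])"

definition Euler_poly :: "nat \<Rightarrow> real poly" where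
  "Euler_poly n = smult (fact n) (fps_nth euler_gf n)"

definition ebrack :: "int \<Rightarrow> int \<Rightarrow> real" where
  "ebrack N j = (if 1 \<le> j \<and> j \<le> N
     then coeff (monom 1 (nat (2*N)) - Euler_poly (nat (2*N))) (nat (2*j - 1)) else 0)"

definition ebrace :: "int \<Rightarrow> int \<Rightarrow> real" where
  "ebrace N j = (if 0 \<le> j \<and> j \<le> N
     then coeff (monom 1 (nat (2*N+1)) - Euler_poly (nat (2*N+1))) (nat (2*j)) else 0)"

definition gbin :: "int \<Rightarrow> int \<Rightarrow> int \<Rightarrow> real" where
  "gbin r n i =
    (if n < 0 \<or> i < 0 \<or> i > n then 0
     else if even r then
       (if n \<ge> max 0 (- (r div 2)) then ebrack (r div 2 + n) (r div 2 + i)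
        else - ebrack (- (r div 2) - i) (- (r div 2) - n))
     else
       (if n \<ge> max 0 (- ((r - 1) div 2)) then ebrace ((r - 1) div 2 + n) ((r - 1) div 2 + i)
        else - ebrace (- ((r + 1) div 2) - i) (- ((r + 1) div 2) - n)))"

end

theory Submission
  imports Defs
begin

text \<open>
  Write \<open>\<tau>\<^sub>q\<close> for the Taylor coefficients of \<open>tanh (t/2) = 1 - 2/(e\<^sup>t + 1)\<close> and \<open>x\<^bsup>(q)\<^esup>\<close> for
  rising factorials. The generating function of the Euler polynomials gives the closed form
  \<open>(n choose i)\<^sub>r = (r + 2i)\<^bsup>(q)\<^esup> \<tau>\<^sub>q\<close> with \<open>q = 2(n - i) + 1\<close>; both branches of the definition
  lead to it, by the reflection \<open>x\<^bsup>(q)\<^esup> = -(1 - x - q)\<^bsup>(q)\<^esup>\<close> for odd \<open>q\<close>. As \<open>\<tau>\<^sub>q = 0\<close> for even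
  \<open>q\<close>, the double sum becomes a sum over all \<open>i + j + k = Q = 2(n - \<alpha> - \<beta>) + 1\<close>, and with
  \<open>u = r + 2\<alpha>\<close>, \<open>v = s + 2\<beta>\<close> the theorem reads
  \<open>\<Sum> \<tau>\<^sub>i \<tau>\<^sub>j \<tau>\<^sub>k u\<^bsup>(j)\<^esup> v\<^bsup>(k)\<^esup> (u + v + j + k)\<^bsup>(i)\<^esup> = \<tau>\<^sub>Q (u\<^bsup>(Q)\<^esup> + v\<^bsup>(Q)\<^esup> - (u + v)\<^bsup>(Q)\<^esup>)\<close>.
  By Vandermonde's identity for rising factorials, this is the image of the polynomial identity
  \<open>\<Sum> \<tau>\<^sub>i \<tau>\<^sub>j \<tau>\<^sub>k (1 + z)\<^sup>i z\<^sup>k = \<tau>\<^sub>Q (1 + z\<^sup>Q - (1 + z)\<^sup>Q)\<close> under the linear map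
  \<open>z\<^sup>m \<mapsto> u\<^bsup>(Q-m)\<^esup> v\<^bsup>(m)\<^esup>\<close>; and that identity is the coefficient of \<open>t\<^sup>Q\<close> in the addition law
  \<open>tanh (a + b) tanh a tanh b = tanh a + tanh b - tanh (a + b)\<close> at \<open>a = t/2\<close>, \<open>b = zt/2\<close>.
\<close>

definition tanh_half_fps :: "real fps" where
  "tanh_half_fps = 1 - 2 * inverse (fps_exp 1 + 1)"

definition tanh_coeff :: "nat \<Rightarrow> real" where
  "tanh_coeff q = tanh_half_fps $ q"

lemma coeff_euler_gf:
  "coeff (euler_gf $ N) j =
     (if j \<le> N then (2 * inverse (fps_exp (1::real) + 1)) $ (N - j) / fact j else 0)"
proof -
  have "euler_gf $ N =
      (\<Sum>k=0..N. monom (1 / fact k) k * [:(2 * inverse (fps_exp (1::real) + 1)) $ (N - k):])"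
    by (simp add: euler_gf_def fps_mult_nth exp_xt_def)
  moreover have "coeff (monom c k * [:d:]) j = (if j = k then c * d else 0)" for c d :: real and k
    by (simp add: coeff_monom_mult coeff_pCons split: nat.split)
  ultimately show ?thesis
    by (simp add: coeff_sum if_distrib sum.delta cong: if_cong)
qed

lemma fact_add_eq_fact_mult_pochhammer:
  "(fact (j + q) :: 'a :: {semiring_char_0, comm_semiring_1}) = fact j * pochhammer (of_nat j + 1) q"
  by (simp add: pochhammer_fact pochhammer_product' add.commute)

lemma coeff_monom_minus_Euler_poly:
  assumes "j < N"
  shows "coeff (monom 1 N - Euler_poly N) j = pochhammer (of_nat j + 1) (N - j) * tanh_coeff (N - j)"
proof -
  obtain q where "N = j + q" and "q > 0"
    using assms less_imp_add_positive by blast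
  then show ?thesis
    by (simp add: Euler_poly_def coeff_euler_gf fact_add_eq_fact_mult_pochhammer
        tanh_coeff_def tanh_half_fps_def)
qed

lemma pochhammer_of_int_eq_0:
  assumes "z \<le> 0" and "0 < z + int q"
  shows "pochhammer (of_int z :: 'a :: field_char_0) q = 0"
  unfolding pochhammer_eq_0_iff by (rule exI[of _ "nat (- z)"]) (use assms in auto)

lemma pochhammer_of_int_reflect:
  assumes "odd q"
  shows "pochhammer (of_int z :: 'a :: comm_ring_1) q = - pochhammer (of_int (1 - z - int q)) q"
  using pochhammer_minus[of "of_int (z + int q - 1) :: 'a" q] assms by (simp add: algebra_simps)

lemma coeff_monom_minus_Euler_poly_int:
  assumes "0 \<le> J" and "J < M"
  shows "coeff (monom 1 (nat M) - Euler_poly (nat M)) (nat J)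
           = pochhammer (of_int (J + 1)) (nat (M - J)) * tanh_coeff (nat (M - J))"
  using coeff_monom_minus_Euler_poly[of "nat J" "nat M"] assms by (simp add: nat_diff_distrib)

lemma ebrack_eq:
  assumes "0 \<le> N" and "j \<le> N"
  shows "ebrack N j =
           pochhammer (of_int (2 * j)) (nat (2 * (N - j) + 1)) * tanh_coeff (nat (2 * (N - j) + 1))"
proof (cases "1 \<le> j")
  case True
  then show ?thesis
    using coeff_monom_minus_Euler_poly_int[of "2 * j - 1" "2 * N"] assms
    by (simp add: ebrack_def algebra_simps)
next
  case False
  then show ?thesis
    using pochhammer_of_int_eq_0[of "2 * j" "nat (2 * (N - j) + 1)", where 'a=real] assms
    by (simp add: ebrack_def)
qed

lemma ebrace_eq:
  assumes "0 \<le> N" and "j \<le> N"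
  shows "ebrace N j =
           pochhammer (of_int (2 * j + 1)) (nat (2 * (N - j) + 1)) * tanh_coeff (nat (2 * (N - j) + 1))"
proof (cases "0 \<le> j")
  case True
  then show ?thesis
    using coeff_monom_minus_Euler_poly_int[of "2 * j" "2 * N + 1"] assms
    by (simp add: ebrace_def algebra_simps)
next
  case False
  then show ?thesis
    using pochhammer_of_int_eq_0[of "2 * j + 1" "nat (2 * (N - j) + 1)", where 'a=real] assms
    by (simp add: ebrace_def)
qed

lemma gbin_even_eq:
  assumes "0 \<le> i" and "i \<le> n"
  defines "q \<equiv> nat (2 * (n - i) + 1)"
  shows "gbin (2 * h) n i = pochhammer (of_int (2 * h + 2 * i)) q * tanh_coeff q"
proof (cases "- h \<le> n")
  case True
  then have "gbin (2 * h) n i = ebrack (h + n) (h + i)"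
    using assms by (simp add: gbin_def)
  then show ?thesis
    using True assms by (simp add: ebrack_eq algebra_simps)
next
  case False
  have "odd q" and "1 - (2 * h + 2 * i) - int q = 2 * (- h - n)"
    using assms by (simp_all add: even_nat_iff)
  then have reflect:
      "pochhammer (of_int (2 * h + 2 * i)) q = - (pochhammer (of_int (2 * (- h - n))) q :: real)"
    by (metis pochhammer_of_int_reflect)
  have "gbin (2 * h) n i = - ebrack (- h - i) (- h - n)"
    using False assms by (simp add: gbin_def)
  also have "\<dots> = - (pochhammer (of_int (2 * (- h - n))) q * tanh_coeff q)"
    using False assms by (simp add: ebrack_eq algebra_simps)
  finally show ?thesis
    using reflect by (metis mult_minus_left)
qed

lemma gbin_odd_eq:
  assumes "0 \<le> i" and "i \<le> n"
  defines "q \<equiv> nat (2 * (n - i) + 1)"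
  shows "gbin (2 * h + 1) n i = pochhammer (of_int (2 * h + 1 + 2 * i)) q * tanh_coeff q"
proof (cases "- h \<le> n")
  case True
  then have "gbin (2 * h + 1) n i = ebrace (h + n) (h + i)"
    using assms by (simp add: gbin_def)
  then show ?thesis
    using True assms by (simp add: ebrace_eq algebra_simps)
next
  case False
  have "odd q" and "1 - (2 * h + 1 + 2 * i) - int q = 2 * (- 1 - h - n) + 1"
    using assms by (simp_all add: even_nat_iff)
  then have reflect: "pochhammer (of_int (2 * h + 1 + 2 * i)) q
      = - (pochhammer (of_int (2 * (- 1 - h - n) + 1)) q :: real)"
    by (metis pochhammer_of_int_reflect)
  have "gbin (2 * h + 1) n i = - ebrace (- 1 - h - i) (- 1 - h - n)"
    using False assms by (simp add: gbin_def)
  also have "\<dots> = - (pochhammer (of_int (2 * (- 1 - h - n) + 1)) q * tanh_coeff q)"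
    using False assms by (simp add: ebrace_eq algebra_simps)
  finally show ?thesis
    using reflect by (metis mult_minus_left)
qed

lemma gbin_eq:
  "gbin r n i = (if 0 \<le> i \<and> i \<le> n
     then pochhammer (of_int (r + 2 * i)) (nat (2 * (n - i) + 1)) * tanh_coeff (nat (2 * (n - i) + 1))
     else 0)"
proof (cases "0 \<le> i \<and> i \<le> n")
  case True
  show ?thesis
  proof (cases "even r")
    case True
    then obtain h where "r = 2 * h" by (elim evenE)
    then show ?thesis
      using \<open>0 \<le> i \<and> i \<le> n\<close> gbin_even_eq by simp
  next
    case False
    then obtain h where "r = 2 * h + 1" by (elim oddE)
    then show ?thesis
      using \<open>0 \<le> i \<and> i \<le> n\<close> gbin_odd_eq by simp
  qed
qed (auto simp: gbin_def)

definition tanh_half_scaled :: "real \<Rightarrow> real fps" where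
  "tanh_half_scaled c = tanh_half_fps oo (fps_const c * fps_X)"

lemma tanh_half_scaled_nth [simp]: "tanh_half_scaled c $ q = c ^ q * tanh_coeff q"
  by (simp add: tanh_half_scaled_def tanh_coeff_def)

lemma fps_exp_plus_1_nonzero: "fps_exp (c :: 'a :: field_char_0) + 1 \<noteq> 0"
proof
  assume "fps_exp c + 1 = 0"
  then have "(fps_exp c + 1) $ 0 = 0" by simp
  then show False by simp
qed

lemma tanh_half_fps_mult_exp: "tanh_half_fps * (fps_exp 1 + 1) = fps_exp 1 - 1"
proof -
  have "inverse (fps_exp (1::real) + 1) * (fps_exp 1 + 1) = 1"
    by (rule inverse_mult_eq_1) simp
  then show ?thesis
    by (simp add: tanh_half_fps_def algebra_simps)
qed

lemma tanh_half_scaled_mult_exp: "tanh_half_scaled c * (fps_exp c + 1) = fps_exp c - 1"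
proof -
  have "(tanh_half_fps * (fps_exp 1 + 1)) oo (fps_const c * fps_X)
      = (fps_exp 1 - 1) oo (fps_const c * fps_X)"
    by (simp add: tanh_half_fps_mult_exp)
  then show ?thesis
    by (simp add: tanh_half_scaled_def fps_compose_mult_distrib fps_compose_add_distrib
        fps_compose_sub_distrib)
qed

lemma tanh_half_scaled_unique:
  assumes "F * (fps_exp c + 1) = fps_exp c - 1"
  shows "F = tanh_half_scaled c"
  using assms tanh_half_scaled_mult_exp[of c] fps_exp_plus_1_nonzero[of c]
  by (metis mult_right_cancel)

lemma tanh_half_scaled_add:
  "tanh_half_scaled (a + b) * tanh_half_scaled a * tanh_half_scaled b
     = tanh_half_scaled a + tanh_half_scaled b - tanh_half_scaled (a + b)"
proof -
  define A B where "A = fps_exp a" and "B = fps_exp b"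
  define Ta Tb Tab where "Ta = tanh_half_scaled a" and "Tb = tanh_half_scaled b"
    and "Tab = tanh_half_scaled (a + b)"
  have a: "Ta * (A + 1) = A - 1" and b: "Tb * (B + 1) = B - 1"
    and ab: "Tab * (A * B + 1) = A * B - 1"
    using tanh_half_scaled_mult_exp[of "a + b"]
    by (simp_all add: A_def B_def Ta_def Tb_def Tab_def tanh_half_scaled_mult_exp fps_exp_add_mult)
  have "(Tab * Ta * Tb) * ((A + 1) * (B + 1) * (A * B + 1))
      = (Tab * (A * B + 1)) * (Ta * (A + 1)) * (Tb * (B + 1))"
    by (simp add: mult_ac)
  also have "\<dots> = (A * B - 1) * (A - 1) * (B - 1)"
    by (simp add: a b ab)
  also have "\<dots> = (Ta * (A + 1)) * (B + 1) * (A * B + 1) + (Tb * (B + 1)) * (A + 1) * (A * B + 1)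
      - (Tab * (A * B + 1)) * (A + 1) * (B + 1)"
    unfolding a b ab by (simp add: algebra_simps)
  also have "\<dots> = (Ta + Tb - Tab) * ((A + 1) * (B + 1) * (A * B + 1))"
    by (simp add: algebra_simps)
  finally have "(Tab * Ta * Tb) * ((A + 1) * (B + 1) * (A * B + 1))
      = (Ta + Tb - Tab) * ((A + 1) * (B + 1) * (A * B + 1))" .
  moreover have "(A + 1) * (B + 1) * (A * B + 1) \<noteq> 0"
    using fps_exp_plus_1_nonzero[of a] fps_exp_plus_1_nonzero[of b] fps_exp_plus_1_nonzero[of "a + b"]
    by (simp add: A_def B_def fps_exp_add_mult)
  ultimately show ?thesis
    by (simp add: Ta_def Tb_def Tab_def)
qed

lemma tanh_half_scaled_uminus_1: "tanh_half_scaled (- 1) = - tanh_half_fps"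
proof -
  have inv: "fps_exp (- 1 :: real) * fps_exp 1 = 1"
    using fps_exp_add_mult[of "- 1 :: real" 1] by simp
  have "(- tanh_half_fps) * (fps_exp (- 1) + 1) * fps_exp 1 = (fps_exp (- 1) - 1) * fps_exp 1"
    using inv tanh_half_fps_mult_exp by (simp add: algebra_simps)
  then have "(- tanh_half_fps) * (fps_exp (- 1) + 1) = fps_exp (- 1) - 1"
    by (metis mult_right_cancel fps_exp_neq_0)
  then show ?thesis
    by (rule tanh_half_scaled_unique[symmetric])
qed

lemma tanh_coeff_even: "even q \<Longrightarrow> tanh_coeff q = 0"
  using arg_cong[OF tanh_half_scaled_uminus_1, of "\<lambda>F. F $ q"]
  by (simp add: tanh_coeff_def)

lemma tanh_coeff_triple_poly:
  "(\<Sum>i=0..Q. \<Sum>j=0..Q-i. smult (tanh_coeff i * tanh_coeff j * tanh_coeff (Q-i-j))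
        ([:1,1:] ^ i * monom 1 (Q-i-j)))
   = smult (tanh_coeff Q) (1 + monom 1 Q - [:1,1:] ^ Q)"
proof (rule poly_ext)
  fix y :: real
  have "(tanh_half_scaled (1 + y) * (tanh_half_scaled 1 * tanh_half_scaled y)) $ Q
      = (tanh_half_scaled 1 + tanh_half_scaled y - tanh_half_scaled (1 + y)) $ Q"
    using tanh_half_scaled_add[of 1 y] by (simp add: mult.assoc)
  then show "poly (\<Sum>i=0..Q. \<Sum>j=0..Q-i. smult (tanh_coeff i * tanh_coeff j * tanh_coeff (Q-i-j))
        ([:1,1:] ^ i * monom 1 (Q-i-j))) y = poly (smult (tanh_coeff Q) (1 + monom 1 Q - [:1,1:] ^ Q)) y"
    unfolding fps_mult_nth
    by (simp add: poly_sum poly_monom algebra_simps sum_distrib_left)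
qed

definition rising_umbral :: "'a :: comm_ring_1 \<Rightarrow> 'a \<Rightarrow> nat \<Rightarrow> 'a poly \<Rightarrow> 'a" where
  "rising_umbral u v Q p = (\<Sum>m\<le>Q. coeff p m * pochhammer u (Q - m) * pochhammer v m)"

lemma rising_umbral_sum:
  "rising_umbral u v Q (\<Sum>x\<in>A. f x) = (\<Sum>x\<in>A. rising_umbral u v Q (f x))"
  unfolding rising_umbral_def coeff_sum sum_distrib_right by (rule sum.swap)

lemma rising_umbral_smult: "rising_umbral u v Q (smult c p) = c * rising_umbral u v Q p"
  by (simp add: rising_umbral_def sum_distrib_left mult.assoc)

lemma rising_umbral_add: "rising_umbral u v Q (p + q) = rising_umbral u v Q p + rising_umbral u v Q q"
  by (simp add: rising_umbral_def sum.distrib algebra_simps)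

lemma rising_umbral_diff: "rising_umbral u v Q (p - q) = rising_umbral u v Q p - rising_umbral u v Q q"
  by (simp add: rising_umbral_def sum_subtractf algebra_simps)

lemma coeff_pCons_1_1_power: "coeff ([:1, 1:] ^ n) k = (of_nat (n choose k) :: 'a :: comm_semiring_1)"
proof (cases "k \<le> n")
  case True
  then show ?thesis using coeff_linear_poly_power[of k n "1::'a" 1] by simp
next
  case False
  have "degree ([:1::'a, 1:] ^ n) \<le> n"
    by (rule order.trans[OF degree_power_le]) simp
  then show ?thesis using False by (simp add: coeff_eq_0 binomial_eq_0)
qed

lemma rising_umbral_binomial_monom:
  assumes "i + j + k = Q"
  shows "rising_umbral u v Q ([:1, 1:] ^ i * monom 1 k)
           = pochhammer u j * pochhammer v k * pochhammer (u + v + of_nat (j + k)) i"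
proof -
  let ?g = "\<lambda>m. of_nat (i choose (m - k)) * pochhammer u (Q - m) * pochhammer v m"
  have "rising_umbral u v Q ([:1, 1:] ^ i * monom 1 k) = (\<Sum>m\<in>{..Q} \<inter> {m. k \<le> m}. ?g m)"
    unfolding rising_umbral_def sum.inter_restrict[OF finite_atMost]
    by (intro sum.cong refl)
      (simp add: mult.commute[of _ "monom 1 k"] coeff_monom_mult coeff_pCons_1_1_power)
  also have "{..Q} \<inter> {m. k \<le> m} = {0 + k..(i + j) + k}"
    using assms by auto
  also have "sum ?g {0 + k..(i + j) + k} = (\<Sum>c=0..i + j. ?g (c + k))"
    by (rule sum.shift_bounds_cl_nat_ivl)
  also have "\<dots> = (\<Sum>c\<le>i. ?g (c + k))"
    by (rule sum.mono_neutral_right) (auto simp: binomial_eq_0)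
  also have "\<dots> = (\<Sum>c\<le>i. pochhammer u j * pochhammer v k *
        (of_nat (i choose c) * pochhammer (v + of_nat k) c * pochhammer (u + of_nat j) (i - c)))"
  proof (rule sum.cong[OF refl])
    fix c assume "c \<in> {..i}"
    then have "Q - (c + k) = j + (i - c)"
      using assms by auto
    then show "?g (c + k) = pochhammer u j * pochhammer v k *
        (of_nat (i choose c) * pochhammer (v + of_nat k) c * pochhammer (u + of_nat j) (i - c))"
      by (simp add: pochhammer_product' add.commute[of c k] mult_ac)
  qed
  also have "\<dots> = pochhammer u j * pochhammer v k * pochhammer ((v + of_nat k) + (u + of_nat j)) i"
    by (simp add: pochhammer_binomial_sum sum_distrib_left)
  finally show ?thesis
    by (simp add: algebra_simps)
qed

lemma tanh_coeff_triple_rising: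
  fixes u v :: real
  shows "(\<Sum>i=0..Q. \<Sum>j=0..Q-i. tanh_coeff i * tanh_coeff j * tanh_coeff (Q-i-j) *
            (pochhammer u j * pochhammer v (Q-i-j) * pochhammer (u + v + of_nat (Q-i)) i))
       = tanh_coeff Q * (pochhammer u Q + pochhammer v Q - pochhammer (u + v) Q)"
proof -
  have "rising_umbral u v Q ([:1, 1:] ^ i * monom 1 (Q-i-j))
          = pochhammer u j * pochhammer v (Q-i-j) * pochhammer (u + v + of_nat (Q-i)) i"
    if "i \<le> Q" and "j \<le> Q - i" for i j
    using rising_umbral_binomial_monom[of i j "Q-i-j" Q u v] that by simp
  moreover have "rising_umbral u v Q 1 = pochhammer u Q"
    and "rising_umbral u v Q (monom 1 Q) = pochhammer v Q"
    and "rising_umbral u v Q ([:1, 1:] ^ Q) = pochhammer (u + v) Q"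
    using rising_umbral_binomial_monom[of 0 Q 0 Q u v] rising_umbral_binomial_monom[of 0 0 Q Q u v]
      rising_umbral_binomial_monom[of Q 0 0 Q u v]
    by simp_all
  ultimately show ?thesis
    using arg_cong[OF tanh_coeff_triple_poly[of Q], of "rising_umbral u v Q"]
    by (simp add: rising_umbral_sum rising_umbral_smult rising_umbral_add rising_umbral_diff)
qed

lemma sum_tanh_coeff_triples_odd:
  "(\<Sum>i=0..Q. \<Sum>j=0..Q-i. tanh_coeff i * tanh_coeff j * tanh_coeff (Q-i-j) * f i j)
     = (\<Sum>(i, j)\<in>{(i, j). i + j \<le> Q \<and> odd i \<and> odd j \<and> odd (Q-i-j)}.
          tanh_coeff i * tanh_coeff j * tanh_coeff (Q-i-j) * f i j)"
proof -
  have "(\<Sum>i=0..Q. \<Sum>j=0..Q-i. tanh_coeff i * tanh_coeff j * tanh_coeff (Q-i-j) * f i j)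
     = (\<Sum>(i, j)\<in>(SIGMA i:{0..Q}. {0..Q-i}). tanh_coeff i * tanh_coeff j * tanh_coeff (Q-i-j) * f i j)"
    by (rule sum.Sigma) auto
  also have "\<dots> = (\<Sum>(i, j)\<in>{(i, j). i + j \<le> Q \<and> odd i \<and> odd j \<and> odd (Q-i-j)}.
          tanh_coeff i * tanh_coeff j * tanh_coeff (Q-i-j) * f i j)"
    using tanh_coeff_even by (intro sum.mono_neutral_right) fastforce+
  finally show ?thesis .
qed

lemma gbin_nonzero_bounds: "gbin r n i \<noteq> 0 \<Longrightarrow> 0 \<le> i \<and> i \<le> n"
  by (auto simp: gbin_def split: if_splits)

lemma sum_gbin_products_support:
  assumes "0 \<le> \<alpha>" and "0 \<le> \<beta>"
  shows "(\<Sum>k\<in>{0..n}. \<Sum>l\<in>{0..k - 1}. gbin t n k * gbin r l \<alpha> * gbin s (k - 1 - l) \<beta>)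
     = (\<Sum>(k, l)\<in>{(k, l). k \<le> n \<and> \<alpha> \<le> l \<and> \<beta> \<le> k - 1 - l}.
          gbin t n k * gbin r l \<alpha> * gbin s (k - 1 - l) \<beta>)"
proof -
  have "(\<Sum>k\<in>{0..n}. \<Sum>l\<in>{0..k - 1}. gbin t n k * gbin r l \<alpha> * gbin s (k - 1 - l) \<beta>)
     = (\<Sum>(k, l)\<in>(SIGMA k:{0..n}. {0..k - 1}). gbin t n k * gbin r l \<alpha> * gbin s (k - 1 - l) \<beta>)"
    by (rule sum.Sigma) auto
  also have "\<dots> = (\<Sum>(k, l)\<in>{(k, l). k \<le> n \<and> \<alpha> \<le> l \<and> \<beta> \<le> k - 1 - l}.
          gbin t n k * gbin r l \<alpha> * gbin s (k - 1 - l) \<beta>)"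
    using assms by (intro sum.mono_neutral_right) (auto dest: gbin_nonzero_bounds)
  finally show ?thesis .
qed

lemma sum_gbin_products_eq_tanh_triples:
  fixes n \<alpha> \<beta> r s :: int
  assumes "0 \<le> \<alpha>" and "0 \<le> \<beta>" and "\<alpha> + \<beta> \<le> n"
  defines "Q \<equiv> nat (2 * (n - \<alpha> - \<beta>) + 1)"
    and "u \<equiv> of_int (r + 2 * \<alpha>) :: real" and "v \<equiv> of_int (s + 2 * \<beta>) :: real"
  shows "(\<Sum>k\<in>{0..n}. \<Sum>l\<in>{0..k - 1}. gbin (r + s) n k * gbin r l \<alpha> * gbin s (k - 1 - l) \<beta>)
    = (\<Sum>i=0..Q. \<Sum>j=0..Q-i. tanh_coeff i * tanh_coeff j * tanh_coeff (Q-i-j) *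
         (pochhammer u j * pochhammer v (Q-i-j) * pochhammer (u + v + of_nat (Q-i)) i))"
proof -
  have Q: "int Q = 2 * (n - \<alpha> - \<beta>) + 1"
    using assms(3) by (simp add: Q_def)
  have term_eq: "gbin (r + s) n k * gbin r l \<alpha> * gbin s (k - 1 - l) \<beta>
      = tanh_coeff i * tanh_coeff j * tanh_coeff (Q-i-j) *
         (pochhammer u j * pochhammer v (Q-i-j) * pochhammer (u + v + of_nat (Q-i)) i)"
    if "k \<le> n" "\<alpha> \<le> l" "\<beta> \<le> k - 1 - l"
      and "i = nat (2 * (n - k) + 1)" "j = nat (2 * (l - \<alpha>) + 1)" for k l i j
  proof -
    have i: "int i = 2 * (n - k) + 1" and j: "int j = 2 * (l - \<alpha>) + 1"
      using that by simp_all
    then have "int i + int j \<le> int Q"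
      using that(3) Q by arith
    then have "int (Q - i - j) = int Q - int i - int j" and "int (Q - i) = int Q - int i"
      by simp_all
    then have "int (Q - i - j) = 2 * (k - 1 - l - \<beta>) + 1"
      and Qi: "int (Q - i) = 2 * (k - \<alpha> - \<beta>)"
      unfolding i j Q by simp_all
    then have Qij: "Q - i - j = nat (2 * (k - 1 - l - \<beta>) + 1)"
      by (metis nat_int)
    from Qi have "(of_nat (Q - i) :: real) = of_int (2 * (k - \<alpha> - \<beta>))"
      by (metis of_int_of_nat_eq)
    then have "u + v + of_nat (Q - i) = of_int (r + s + 2 * k)"
      unfolding u_def v_def by simp
    moreover have "gbin (r + s) n k = pochhammer (of_int (r + s + 2 * k)) i * tanh_coeff i"
      and "gbin r l \<alpha> = pochhammer u j * tanh_coeff j"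
      and "gbin s (k - 1 - l) \<beta> = pochhammer v (Q - i - j) * tanh_coeff (Q - i - j)"
      using that assms(1,2) unfolding Qij u_def v_def by (simp_all add: gbin_eq)
    ultimately show ?thesis
      by (simp add: mult_ac)
  qed
  \<comment> \<open>The orders of the three rising factorials in a nonzero term are odd and sum to \<open>Q\<close>.\<close>
  show ?thesis
    unfolding sum_gbin_products_support[OF assms(1,2)] sum_tanh_coeff_triples_odd
  proof (rule sum.reindex_bij_witness
      [where j = "\<lambda>(k, l). (nat (2 * (n - k) + 1), nat (2 * (l - \<alpha>) + 1))"
        and i = "\<lambda>(i, j). (n - int (i div 2), \<alpha> + int (j div 2))"])
    fix p assume "p \<in> {(k, l). k \<le> n \<and> \<alpha> \<le> l \<and> \<beta> \<le> k - 1 - l}"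
    then show "(case case p of (k, l) \<Rightarrow> (nat (2 * (n - k) + 1), nat (2 * (l - \<alpha>) + 1)) of
                 (i, j) \<Rightarrow> (n - int (i div 2), \<alpha> + int (j div 2))) = p"
      by (auto simp: nat_add_distrib nat_mult_distrib)
    show "(case p of (k, l) \<Rightarrow> (nat (2 * (n - k) + 1), nat (2 * (l - \<alpha>) + 1)))
          \<in> {(i, j). i + j \<le> Q \<and> odd i \<and> odd j \<and> odd (Q - i - j)}"
      using \<open>p \<in> _\<close> assms(1,2) Q by (auto simp: even_nat_iff) presburger+
  next
    fix p assume "p \<in> {(i, j). i + j \<le> Q \<and> odd i \<and> odd j \<and> odd (Q - i - j)}"
    then show "(case case p of (i, j) \<Rightarrow> (n - int (i div 2), \<alpha> + int (j div 2)) of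
                 (k, l) \<Rightarrow> (nat (2 * (n - k) + 1), nat (2 * (l - \<alpha>) + 1))) = p"
      by (auto elim!: oddE)
    show "(case p of (i, j) \<Rightarrow> (n - int (i div 2), \<alpha> + int (j div 2)))
          \<in> {(k, l). k \<le> n \<and> \<alpha> \<le> l \<and> \<beta> \<le> k - 1 - l}"
      using \<open>p \<in> _\<close> assms(1,2) Q by (auto elim!: oddE)
  next
    fix p assume "p \<in> {(k, l). k \<le> n \<and> \<alpha> \<le> l \<and> \<beta> \<le> k - 1 - l}"
    then show "(case case p of (k, l) \<Rightarrow> (nat (2 * (n - k) + 1), nat (2 * (l - \<alpha>) + 1)) of
        (i, j) \<Rightarrow> tanh_coeff i * tanh_coeff j * tanh_coeff (Q - i - j) *
           (pochhammer u j * pochhammer v (Q - i - j) * pochhammer (u + v + of_nat (Q - i)) i))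
      = (case p of (k, l) \<Rightarrow> gbin (r + s) n k * gbin r l \<alpha> * gbin s (k - 1 - l) \<beta>)"
      using term_eq by auto
  qed
qed

theorem theorem6p1:
  fixes n \<alpha> \<beta> r s :: int
  assumes "n \<ge> 0" and "\<alpha> \<ge> 0" and "\<beta> \<ge> 0"
  shows "gbin r (n - \<beta>) \<alpha> + gbin s (n - \<alpha>) \<beta>
       = gbin (r + s) n (\<alpha> + \<beta>)
         + (\<Sum>k\<in>{0..n}. \<Sum>l\<in>{0..k - 1}.
              gbin (r + s) n k * gbin r l \<alpha> * gbin s (k - 1 - l) \<beta>)"
proof (cases "\<alpha> + \<beta> \<le> n")
  case True
  define Q where "Q = nat (2 * (n - \<alpha> - \<beta>) + 1)"
  define u v where "u = (of_int (r + 2 * \<alpha>) :: real)" and "v = (of_int (s + 2 * \<beta>) :: real)"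
  have "gbin r (n - \<beta>) \<alpha> = pochhammer u Q * tanh_coeff Q"
    and "gbin s (n - \<alpha>) \<beta> = pochhammer v Q * tanh_coeff Q"
    and "gbin (r + s) n (\<alpha> + \<beta>) = pochhammer (u + v) Q * tanh_coeff Q"
    using True assms by (simp_all add: gbin_eq Q_def u_def v_def algebra_simps)
  then show ?thesis
    using sum_gbin_products_eq_tanh_triples[OF assms(2,3) True, of r s]
      tanh_coeff_triple_rising[of Q u v]
    by (simp add: Q_def u_def v_def algebra_simps)
next
  case False
  then have no_terms: "{(k, l). k \<le> n \<and> \<alpha> \<le> l \<and> \<beta> \<le> k - 1 - l} = {}"
    by auto
  have "gbin r (n - \<beta>) \<alpha> = 0" and "gbin s (n - \<alpha>) \<beta> = 0"
    and "gbin (r + s) n (\<alpha> + \<beta>) = 0"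
    using False gbin_nonzero_bounds by force+
  then show ?thesis
    unfolding sum_gbin_products_support[OF assms(2,3)] no_terms by simp
qed

end
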